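(* Let $n\ge2$ and let $u=x_0+h_1x_1+\cdots+h_{n-1}x_{n-1}$ be a polar $n$-complex number with $v_+>0$, with $v_->0$ if $n$ is even, and with $\rho_k>0$ for all $k=1,\dots,\lfloor(n-1)/2\rfloor$. Then $$u=\exp\Big[e_+\ln v_++e_-\ln v_-+\sum_{k=1}^{n/2-1}\big(e_k\ln\rho_k+\tilde e_k\phi_k\big)\Big]\quad(n\text{ even}),$$ $$u=\exp\Big[e_+\ln v_++\sum_{k=1}^{(n-1)/2}\big(e_k\ln\rho_k+\tilde e_k\phi_k\big)\Big]\quad(n\text{ odd}),$$ where $\exp w=\sum_{j\ge0}w^j/j!$. Equivalently, $u=\big(e_+v_++e_-v_-+\sum_{k}e_k\rho_k\big)\exp\big(\sum_k\tilde e_k\phi_k\big)$ (the $e_-$ term present only for even $n$).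
   Context: Polar $n$-complex numbers: $u=x_0+h_1x_1+\cdots+h_{n-1}x_{n-1}$, $x_j\in\mathbb{R}$, $h_0=1$, with componentwise addition and bilinear multiplication $h_jh_k=h_{(j+k)\bmod n}$. Canonical variables: $v_+=\sum_px_p$; for even $n$, $v_-=\sum_p(-1)^px_p$; for $k=1,\dots,\lfloor(n-1)/2\rfloor$, $v_k=\sum_px_p\cos(2\pi kp/n)$, $\tilde v_k=\sum_px_p\sin(2\pi kp/n)$, $\rho_k=\sqrt{v_k^2+\tilde v_k^2}$, and (for $\rho_k>0$) $\phi_k\in[0,2\pi)$ with $\cos\phi_k=v_k/\rho_k$, $\sin\phi_k=\tilde v_k/\rho_k$. Canonical base: $e_+=\frac1n\sum_{p=0}^{n-1}h_p$; for even $n$, $e_-=\frac1n\sum_{p=0}^{n-1}(-1)^ph_p$; $e_k=\frac2n\sum_{p=0}^{n-1}\cos(2\pi kp/n)h_p$, $\tilde e_k=\frac2n\sum_{p=0}^{n-1}\sin(2\pi kp/n)h_p$ for $k=1,\dots,\lfloor(n-1)/2\rfloor$. *)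

theory Defs
  imports Complex_Main
begin

text \<open>Polar n-complex numbers are represented as coefficient functions
  x :: nat \<Rightarrow> real, where only the values x 0, ..., x (n-1) are meaningful
  (u = x 0 + h_1 x 1 + ... + h_{n-1} x (n-1)).\<close>

definition pc_one :: "nat \<Rightarrow> (nat \<Rightarrow> real)" where
  "pc_one n = (\<lambda>p. if p = 0 then 1 else 0)"

text \<open>Multiplication from h_j h_k = h_{(j+k) mod n}, extended bilinearly.\<close>
definition pc_mult :: "nat \<Rightarrow> (nat \<Rightarrow> real) \<Rightarrow> (nat \<Rightarrow> real) \<Rightarrow> (nat \<Rightarrow> real)" where
  "pc_mult n a b = (\<lambda>r. \<Sum>j<n. \<Sum>k<n. if (j + k) mod n = r then a j * b k else 0)"

fun pc_pow :: "nat \<Rightarrow> (nat \<Rightarrow> real) \<Rightarrow> nat \<Rightarrow> (nat \<Rightarrow> real)" where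
  "pc_pow n w 0 = pc_one n"
| "pc_pow n w (Suc j) = pc_mult n (pc_pow n w j) w"

definition pc_exp :: "nat \<Rightarrow> (nat \<Rightarrow> real) \<Rightarrow> (nat \<Rightarrow> real)" where
  "pc_exp n w = (\<lambda>p. \<Sum>j. pc_pow n w j p / fact j)"

definition v_plus :: "nat \<Rightarrow> (nat \<Rightarrow> real) \<Rightarrow> real" where
  "v_plus n x = (\<Sum>p<n. x p)"

definition v_minus :: "nat \<Rightarrow> (nat \<Rightarrow> real) \<Rightarrow> real" where
  "v_minus n x = (\<Sum>p<n. (-1) ^ p * x p)"

definition v_k :: "nat \<Rightarrow> nat \<Rightarrow> (nat \<Rightarrow> real) \<Rightarrow> real" where
  "v_k n k x = (\<Sum>p<n. x p * cos (2 * pi * real k * real p / real n))"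

definition vt_k :: "nat \<Rightarrow> nat \<Rightarrow> (nat \<Rightarrow> real) \<Rightarrow> real" where
  "vt_k n k x = (\<Sum>p<n. x p * sin (2 * pi * real k * real p / real n))"

definition rho_k :: "nat \<Rightarrow> nat \<Rightarrow> (nat \<Rightarrow> real) \<Rightarrow> real" where
  "rho_k n k x = sqrt ((v_k n k x)\<^sup>2 + (vt_k n k x)\<^sup>2)"

definition phi_k :: "nat \<Rightarrow> nat \<Rightarrow> (nat \<Rightarrow> real) \<Rightarrow> real" where
  "phi_k n k x = (THE \<phi>. 0 \<le> \<phi> \<and> \<phi> < 2 * pi \<and>
      cos \<phi> = v_k n k x / rho_k n k x \<and> sin \<phi> = vt_k n k x / rho_k n k x)"

definition e_plus :: "nat \<Rightarrow> (nat \<Rightarrow> real)" where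
  "e_plus n = (\<lambda>p. 1 / real n)"

definition e_minus :: "nat \<Rightarrow> (nat \<Rightarrow> real)" where
  "e_minus n = (\<lambda>p. (-1) ^ p / real n)"

definition e_k :: "nat \<Rightarrow> nat \<Rightarrow> (nat \<Rightarrow> real)" where
  "e_k n k = (\<lambda>p. 2 / real n * cos (2 * pi * real k * real p / real n))"

definition et_k :: "nat \<Rightarrow> nat \<Rightarrow> (nat \<Rightarrow> real)" where
  "et_k n k = (\<lambda>p. 2 / real n * sin (2 * pi * real k * real p / real n))"

end

theory Submission
  imports Defs
begin

text \<open>Let \<omega> = exp (2 \<pi> i / n). Sending h_p to \<omega>^(j p) respects
  h_j h_k = h_((j + k) mod n), so each coordinate u \<mapsto> dft n j u is a ring homomorphism
  into \<complex> and therefore commutes with the exponential series. The coordinate j of u is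
  v_j + i \<cdot> vt_j, that is v_+ for j = 0, v_- for j = n/2 and \<rho>_j exp (i \<phi>_j) otherwise.
  Dually, for 0 \<le> j \<le> n/2 the canonical base elements e_+, e_-, e_k, et_k have coordinate j
  equal to 1, 1, 1, i when j is 0, n/2, k, k, and 0 otherwise. Hence both sides of each
  identity have the same coordinates j for 2 j \<le> n. The coordinate n - j is the conjugate of
  the coordinate j, and Fourier inversion recovers u from all n coordinates.\<close>

definition dft :: "nat \<Rightarrow> nat \<Rightarrow> (nat \<Rightarrow> real) \<Rightarrow> complex" where
  "dft n j w = (\<Sum>p<n. of_real (w p) * cis (2 * pi * real j * real p / real n))"

lemma cis_2pi_frac_mod:
  assumes "n > 0"
  shows "cis (2 * pi * real j * real (m mod n) / real n) = cis (2 * pi * real j * real m / real n)"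
proof -
  have "real m = real (m mod n) + real n * real (m div n)"
    by (metis of_nat_add of_nat_mult mod_div_mult_eq mult.commute)
  then have "2 * pi * real j * real m / real n
      = 2 * pi * real j * real (m mod n) / real n + 2 * pi * real (j * (m div n))"
    using assms by (simp add: field_simps)
  then show ?thesis
    by (simp flip: cis_mult)
qed

lemma sum_cis_2pi_frac:
  assumes "n > 0"
  shows "(\<Sum>p<n. cis (2 * pi * of_int m * real p / real n)) = (if int n dvd m then of_nat n else 0)"
proof -
  define z where "z = cis (2 * pi * of_int m / real n)"
  have powers: "cis (2 * pi * of_int m * real p / real n) = z ^ p" for p
    by (simp add: z_def DeMoivre field_simps)
  show ?thesis
  proof (cases "int n dvd m")
    case True
    then obtain t where "m = int n * t" by blast
    then have "2 * pi * of_int m / real n = 2 * pi * of_int t"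
      using assms by simp
    then have "z = 1"
      unfolding z_def by (simp only:) (rule cis_multiple_2pi, simp)
    then show ?thesis
      using True by (simp add: powers)
  next
    case False
    have "z \<noteq> 1"
    proof
      assume "z = 1"
      then have "sin (2 * pi * of_int m / real n) = sin 0 \<and> cos (2 * pi * of_int m / real n) = cos 0"
        by (simp add: z_def complex_eq_iff)
      then obtain t :: int where "2 * pi * of_int m / real n = 2 * pi * t"
        unfolding sin_cos_eq_iff by auto
      then have "of_int m = real_of_int (int n * t)"
        using assms by (simp add: field_simps)
      then have "m = int n * t"
        by (simp only: of_int_eq_iff)
      with False show False by simp
    qed
    moreover have "z ^ n = 1"
      using assms by (simp add: z_def DeMoivre)
    ultimately show ?thesis
      using False by (simp add: powers sum_gp_strict)
  qed
qed

lemma zdvd_iff_zero_if_abs_less: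
  fixes m :: int
  assumes "\<bar>m\<bar> < int n"
  shows "int n dvd m \<longleftrightarrow> m = 0"
  using dvd_imp_le_int[of m "int n"] assms by force

lemma dft_pc_mult:
  assumes "n > 0"
  shows "dft n j (pc_mult n a b) = dft n j a * dft n j b"
proof -
  let ?\<omega> = "\<lambda>m. cis (2 * pi * real j * real m / real n)"
  have "dft n j (pc_mult n a b)
      = (\<Sum>r<n. \<Sum>i<n. \<Sum>k<n. if (i + k) mod n = r then of_real (a i * b k) * ?\<omega> r else 0)"
    unfolding dft_def pc_mult_def sum_distrib_right of_real_sum
    by (intro sum.cong refl) simp
  also have "\<dots> = (\<Sum>i<n. \<Sum>k<n. \<Sum>r<n.
      if (i + k) mod n = r then of_real (a i * b k) * ?\<omega> r else 0)"
    by (subst sum.swap) (rule sum.cong[OF refl], rule sum.swap)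
  also have "\<dots> = (\<Sum>i<n. \<Sum>k<n. of_real (a i * b k) * ?\<omega> ((i + k) mod n))"
    using assms by simp
  also have "\<dots> = (\<Sum>i<n. \<Sum>k<n. (of_real (a i) * ?\<omega> i) * (of_real (b k) * ?\<omega> k))"
    using assms
    by (intro sum.cong refl) (simp add: cis_2pi_frac_mod cis_mult distrib_left add_divide_distrib)
  also have "\<dots> = dft n j a * dft n j b"
    unfolding dft_def by (simp add: sum_product)
  finally show ?thesis .
qed

lemma dft_pc_one:
  assumes "n > 0"
  shows "dft n j (pc_one n) = 1"
  using assms unfolding dft_def pc_one_def by (simp add: sum.remove[of _ 0])

lemma dft_pc_pow: "n > 0 \<Longrightarrow> dft n j (pc_pow n w m) = dft n j w ^ m"
  by (induction m) (simp_all add: dft_pc_one dft_pc_mult)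

lemma dft_add: "dft n j (\<lambda>q. f q + g q) = dft n j f + dft n j g"
  unfolding dft_def by (simp add: sum.distrib distrib_right)

lemma dft_mult_const: "dft n j (\<lambda>q. f q * c) = dft n j f * of_real c"
  unfolding dft_def sum_distrib_right by (intro sum.cong refl) (simp add: mult_ac)

lemma dft_const_mult: "dft n j (\<lambda>q. c * f q) = of_real c * dft n j f"
  unfolding dft_def sum_distrib_left by (intro sum.cong refl) (simp add: mult_ac)

lemma dft_sum: "dft n j (\<lambda>q. \<Sum>k\<in>K. f k q) = (\<Sum>k\<in>K. dft n j (f k))"
  unfolding dft_def of_real_sum sum_distrib_right by (rule sum.swap)

definition pc_norm :: "nat \<Rightarrow> (nat \<Rightarrow> real) \<Rightarrow> real" where
  "pc_norm n w = (\<Sum>p<n. \<bar>w p\<bar>)"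

lemma pc_norm_nonneg: "pc_norm n w \<ge> 0"
  unfolding pc_norm_def by (simp add: sum_nonneg)

lemma abs_le_pc_norm: "p < n \<Longrightarrow> \<bar>w p\<bar> \<le> pc_norm n w"
  unfolding pc_norm_def by (rule member_le_sum) auto

lemma pc_norm_mult: "pc_norm n (pc_mult n a b) \<le> pc_norm n a * pc_norm n b"
proof -
  let ?t = "\<lambda>r i k. if (i + k) mod n = r then \<bar>a i\<bar> * \<bar>b k\<bar> else 0"
  have "pc_norm n (pc_mult n a b) \<le> (\<Sum>r<n. \<Sum>i<n. \<Sum>k<n. ?t r i k)"
    unfolding pc_norm_def pc_mult_def
    by (intro sum_mono order_trans[OF sum_abs]) (simp add: abs_mult)
  also have "\<dots> = (\<Sum>i<n. \<Sum>k<n. \<Sum>r<n. ?t r i k)"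
    by (subst sum.swap) (rule sum.cong[OF refl], rule sum.swap)
  also have "\<dots> \<le> (\<Sum>i<n. \<Sum>k<n. \<bar>a i\<bar> * \<bar>b k\<bar>)"
    by (intro sum_mono) simp
  also have "\<dots> = pc_norm n a * pc_norm n b"
    unfolding pc_norm_def by (simp add: sum_product)
  finally show ?thesis .
qed

lemma pc_norm_pow:
  assumes "n > 0"
  shows "pc_norm n (pc_pow n w m) \<le> pc_norm n w ^ m"
proof (induction m)
  case 0
  show ?case
    using assms by (simp add: pc_norm_def pc_one_def)
next
  case (Suc m)
  have "pc_norm n (pc_pow n w (Suc m)) \<le> pc_norm n (pc_pow n w m) * pc_norm n w"
    by (simp add: pc_norm_mult)
  also have "\<dots> \<le> pc_norm n w ^ m * pc_norm n w"
    using Suc.IH by (intro mult_right_mono pc_norm_nonneg)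
  finally show ?case
    by (simp add: mult.commute)
qed

lemma summable_pc_exp_series:
  assumes "p < n"
  shows "summable (\<lambda>m. pc_pow n w m p / fact m)"
proof (rule summable_comparison_test')
  show "summable (\<lambda>m. pc_norm n w ^ m / fact m)"
    using summable_exp_generic[of "pc_norm n w"] by (simp add: divide_inverse mult.commute)
  fix m
  have "\<bar>pc_pow n w m p\<bar> \<le> pc_norm n w ^ m"
    using assms by (intro order.trans[OF abs_le_pc_norm pc_norm_pow]) auto
  then show "norm (pc_pow n w m p / fact m) \<le> pc_norm n w ^ m / fact m"
    by (simp add: divide_right_mono)
qed

lemma dft_pc_exp:
  assumes "n > 0"
  shows "dft n j (pc_exp n w) = exp (dft n j w)"
proof -
  let ?\<omega> = "\<lambda>p. cis (2 * pi * real j * real p / real n)"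
  have "(\<lambda>m. \<Sum>p<n. of_real (pc_pow n w m p / fact m) * ?\<omega> p) sums dft n j (pc_exp n w)"
    unfolding dft_def pc_exp_def
    by (intro sums_sum sums_mult2 sums_of_real summable_sums summable_pc_exp_series) simp
  moreover have "(\<Sum>p<n. of_real (pc_pow n w m p / fact m) * ?\<omega> p) = dft n j w ^ m /\<^sub>R fact m"
    for m
    using dft_pc_pow[OF assms, of j w m]
    unfolding dft_def by (simp add: scaleR_conv_of_real divide_inverse mult_ac flip: sum_distrib_left)
  ultimately have "(\<lambda>m. dft n j w ^ m /\<^sub>R fact m) sums dft n j (pc_exp n w)"
    by simp
  then show ?thesis
    using exp_converges sums_unique2 by blast
qed

lemma dft_inversion:
  assumes "p < n"
  shows "(\<Sum>j<n. dft n j w * cis (- (2 * pi * real j * real p / real n))) = of_nat n * of_real (w p)"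
proof -
  have "(\<Sum>j<n. dft n j w * cis (- (2 * pi * real j * real p / real n)))
      = (\<Sum>q<n. of_real (w q) * (\<Sum>j<n. cis (2 * pi * of_int (int q - int p) * real j / real n)))"
    unfolding dft_def sum_distrib_right sum_distrib_left
    by (subst sum.swap)
      (intro sum.cong refl, simp add: cis_mult mult_ac diff_divide_distrib right_diff_distrib)
  also have "\<dots> = (\<Sum>q<n. if q = p then of_real (w q) * of_nat n else 0)"
  proof (intro sum.cong refl)
    fix q
    assume "q \<in> {..<n}"
    then have "int n dvd (int q - int p) \<longleftrightarrow> q = p"
      using assms by (subst zdvd_iff_zero_if_abs_less) auto
    moreover have "n > 0"
      using assms by simp
    ultimately have "(\<Sum>j<n. cis (2 * pi * of_int (int q - int p) * real j / real n))
        = (if q = p then of_nat n else 0)"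
      by (simp only: sum_cis_2pi_frac)
    then show "of_real (w q) * (\<Sum>j<n. cis (2 * pi * of_int (int q - int p) * real j / real n))
        = (if q = p then of_real (w q) * of_nat n else 0)"
      by simp
  qed
  also have "\<dots> = of_nat n * of_real (w p)"
    using assms by (simp add: mult.commute)
  finally show ?thesis .
qed

lemma dft_reflect:
  assumes "j \<le> n"
  shows "dft n (n - j) w = cnj (dft n j w)"
  unfolding dft_def cnj_sum
proof (intro sum.cong refl)
  fix p
  assume "p \<in> {..<n}"
  then have angle: "2 * pi * real (n - j) * real p / real n
      = - (2 * pi * real j * real p / real n) + 2 * pi * real p"
    using assms by (simp add: field_simps)
  show "of_real (w p) * cis (2 * pi * real (n - j) * real p / real n)
      = cnj (of_real (w p) * cis (2 * pi * real j * real p / real n))"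
    unfolding angle cis_mult[symmetric] by (simp add: cis_cnj)
qed

lemma pc_eq_if_dft_eq:
  assumes dft_eq: "\<And>j. 2 * j \<le> n \<Longrightarrow> dft n j a = dft n j b" and "p < n"
  shows "a p = b p"
proof -
  have "dft n j a = dft n j b" if "j < n" for j
  proof (cases "2 * j \<le> n")
    case True
    then show ?thesis by (rule dft_eq)
  next
    case False
    then have "dft n (n - j) a = dft n (n - j) b"
      by (intro dft_eq) simp
    then show ?thesis
      using dft_reflect[of "n - j" n] that by simp
  qed
  then have "of_nat n * of_real (a p) = (\<Sum>j<n. dft n j b * cis (- (2 * pi * real j * real p / real n)))"
    by (simp flip: dft_inversion[OF \<open>p < n\<close>])
  also have "\<dots> = of_nat n * of_real (b p)"
    using \<open>p < n\<close> by (rule dft_inversion)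
  finally show ?thesis
    using \<open>p < n\<close> by simp
qed

lemma cos_mult_cis: "of_real (cos a) * cis b = (cis (b + a) + cis (b - a)) / 2"
  by (simp add: complex_eq_iff cos_add cos_diff sin_add sin_diff)

lemma sin_mult_cis: "of_real (sin a) * cis b = \<i> * (cis (b - a) - cis (b + a)) / 2"
  by (simp add: complex_eq_iff cos_add cos_diff sin_add sin_diff)

lemma dft_cos:
  assumes "n > 0"
  shows "dft n j (\<lambda>p. cos (2 * pi * real k * real p / real n))
    = ((if int n dvd (int j + int k) then of_nat n else 0)
        + (if int n dvd (int j - int k) then of_nat n else 0)) / 2"
proof -
  let ?\<omega> = "\<lambda>m p. cis (2 * pi * of_int m * real p / real n)"
  have "dft n j (\<lambda>p. cos (2 * pi * real k * real p / real n))
      = (\<Sum>p<n. (?\<omega> (int j + int k) p + ?\<omega> (int j - int k) p) / 2)"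
    unfolding dft_def cos_mult_cis
    by (intro sum.cong refl) (simp add: algebra_simps add_divide_distrib diff_divide_distrib)
  then show ?thesis
    by (simp only: sum_divide_distrib[symmetric] sum.distrib sum_cis_2pi_frac[OF assms])
qed

lemma dft_sin:
  assumes "n > 0"
  shows "dft n j (\<lambda>p. sin (2 * pi * real k * real p / real n))
    = \<i> * ((if int n dvd (int j - int k) then of_nat n else 0)
        - (if int n dvd (int j + int k) then of_nat n else 0)) / 2"
proof -
  let ?\<omega> = "\<lambda>m p. cis (2 * pi * of_int m * real p / real n)"
  have "dft n j (\<lambda>p. sin (2 * pi * real k * real p / real n))
      = \<i> * (\<Sum>p<n. ?\<omega> (int j - int k) p - ?\<omega> (int j + int k) p) / 2"
    unfolding dft_def sin_mult_cis sum_distrib_left sum_divide_distrib sum_subtractf[symmetric]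
    by (intro sum.cong refl) (simp add: algebra_simps add_divide_distrib diff_divide_distrib)
  then show ?thesis
    by (simp only: sum_subtractf sum_cis_2pi_frac[OF assms])
qed

lemma dft_e_plus:
  assumes "j < n"
  shows "dft n j (e_plus n) = (if j = 0 then 1 else 0)"
proof -
  have n: "n > 0"
    using assms by simp
  have e_plus_cos: "e_plus n = (\<lambda>p. 1 / real n * cos (2 * pi * real 0 * real p / real n))"
    by (simp add: e_plus_def)
  have "int n dvd int j \<longleftrightarrow> j = 0"
    using assms by (subst zdvd_iff_zero_if_abs_less) auto
  then show ?thesis
    using n unfolding e_plus_cos dft_const_mult dft_cos[OF n] by simp
qed

lemma dft_e_minus:
  assumes "even n" "n > 0" "2 * j \<le> n"
  shows "dft n j (e_minus n) = (if 2 * j = n then 1 else 0)"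
proof -
  have e_minus_cos: "e_minus n = (\<lambda>p. 1 / real n * cos (2 * pi * real (n div 2) * real p / real n))"
    using \<open>even n\<close> by (auto simp: e_minus_def fun_eq_iff mult_ac)
  have "int n dvd (int j + int (n div 2)) \<longleftrightarrow> 2 * j = n"
  proof -
    have "int n dvd (int j + int (n div 2)) \<longleftrightarrow> int n dvd (int j + int (n div 2) - int n)"
      by (metis diff_add_cancel dvd_add_left_iff dvd_refl)
    also have "\<dots> \<longleftrightarrow> 2 * j = n"
      using assms by (subst zdvd_iff_zero_if_abs_less) auto
    finally show ?thesis .
  qed
  moreover have "int n dvd (int j - int (n div 2)) \<longleftrightarrow> 2 * j = n"
    using assms by (subst zdvd_iff_zero_if_abs_less) auto
  ultimately show ?thesis
    using assms unfolding e_minus_cos dft_const_mult dft_cos[OF \<open>n > 0\<close>] by simp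
qed

lemma dft_e_k:
  assumes "0 < k" "2 * k < n" "2 * j \<le> n"
  shows "dft n j (e_k n k) = (if j = k then 1 else 0)"
proof -
  have n: "n > 0"
    using assms by simp
  have "\<not> int n dvd (int j + int k)" "int n dvd (int j - int k) \<longleftrightarrow> j = k"
    using assms by (subst zdvd_iff_zero_if_abs_less; simp)+
  then show ?thesis
    using n unfolding e_k_def dft_const_mult dft_cos[OF n] by simp
qed

lemma dft_et_k:
  assumes "0 < k" "2 * k < n" "2 * j \<le> n"
  shows "dft n j (et_k n k) = (if j = k then \<i> else 0)"
proof -
  have n: "n > 0"
    using assms by simp
  have "\<not> int n dvd (int j + int k)" "int n dvd (int j - int k) \<longleftrightarrow> j = k"
    using assms by (subst zdvd_iff_zero_if_abs_less; simp)+
  then show ?thesis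
    using n unfolding et_k_def dft_const_mult dft_sin[OF n] by simp
qed

definition canonical_comb ::
    "nat \<Rightarrow> real \<Rightarrow> real \<Rightarrow> (nat \<Rightarrow> real) \<Rightarrow> (nat \<Rightarrow> real) \<Rightarrow> nat \<Rightarrow> real" where
  "canonical_comb n a b c d = (\<lambda>q. e_plus n q * a + (if even n then e_minus n q * b else 0)
      + (\<Sum>k=1..(n - 1) div 2. e_k n k q * c k + et_k n k q * d k))"

lemma dft_canonical_comb:
  assumes "n > 0" "2 * j \<le> n"
  shows "dft n j (canonical_comb n a b c d)
    = (if j = 0 then of_real a else if 2 * j = n then of_real b else Complex (c j) (d j))"
proof -
  let ?m = "(n - 1) div 2"
  have "j < n"
    using assms by simp
  have plus: "dft n j (\<lambda>q. e_plus n q * a) = (if j = 0 then of_real a else 0)"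
    using \<open>j < n\<close> by (simp add: dft_mult_const dft_e_plus)
  have minus: "dft n j (\<lambda>q. if even n then e_minus n q * b else 0)
      = (if 2 * j = n then of_real b else 0)"
  proof (cases "even n")
    case True
    then show ?thesis
      using assms by (simp add: dft_mult_const dft_e_minus)
  next
    case False
    then have "2 * j \<noteq> n"
      by auto
    with False show ?thesis
      by (simp add: dft_def)
  qed
  have "dft n j (\<lambda>q. e_k n k q * c k + et_k n k q * d k) = (if k = j then Complex (c k) (d k) else 0)"
    if "k \<in> {1..?m}" for k
    using that assms by (auto simp: dft_add dft_mult_const dft_e_k dft_et_k complex_eq_iff)
  then have pairs: "dft n j (\<lambda>q. \<Sum>k=1..?m. e_k n k q * c k + et_k n k q * d k)
      = (if 1 \<le> j \<and> j \<le> ?m then Complex (c j) (d j) else 0)"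
    by (simp add: dft_sum)
  show ?thesis
    unfolding canonical_comb_def dft_add plus minus pairs
    using assms by auto
qed

lemma dft_eq_Complex_v_k_vt_k: "dft n j x = Complex (v_k n j x) (vt_k n j x)"
  unfolding dft_def v_k_def vt_k_def by (simp add: complex_eq_iff mult.commute)

lemma dft_0_eq_v_plus: "dft n 0 x = of_real (v_plus n x)"
  unfolding dft_def v_plus_def by simp

lemma dft_half_eq_v_minus:
  assumes "2 * j = n"
  shows "dft n j x = of_real (v_minus n x)"
  unfolding dft_def v_minus_def of_real_sum
proof (intro sum.cong refl)
  fix p
  assume "p \<in> {..<n}"
  then have "2 * pi * real j * real p / real n = real p * pi"
    using assms by auto
  moreover have "cis (real p * pi) = (-1) ^ p"
    by (metis DeMoivre cis_pi)
  ultimately show "of_real (x p) * cis (2 * pi * real j * real p / real n) = of_real ((-1) ^ p * x p)"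
    by simp
qed

lemma cos_sin_eq_imp_eq_0_2pi:
  fixes s t :: real
  assumes "0 \<le> s" "s < 2 * pi" "0 \<le> t" "t < 2 * pi" "cos s = cos t" "sin s = sin t"
  shows "s = t"
proof -
  obtain m :: int where m: "s = t + 2 * pi * m"
    using assms sin_cos_eq_iff by metis
  have "2 * pi * \<bar>real_of_int m\<bar> = \<bar>s - t\<bar>"
    using m by (simp add: abs_mult)
  also have "\<dots> < 2 * pi * 1"
    using assms by (simp add: abs_less_iff)
  finally have "\<bar>real_of_int m\<bar> < 1"
    by (rule mult_left_less_imp_less) simp
  with m show ?thesis
    by simp
qed

lemma cos_sin_phi_k:
  assumes "rho_k n k x > 0"
  shows "cos (phi_k n k x) = v_k n k x / rho_k n k x" "sin (phi_k n k x) = vt_k n k x / rho_k n k x"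
proof -
  let ?r = "rho_k n k x" and ?v = "v_k n k x" and ?w = "vt_k n k x"
  have "(?v / ?r)\<^sup>2 + (?w / ?r)\<^sup>2 = (?v\<^sup>2 + ?w\<^sup>2) / ?r\<^sup>2"
    by (simp add: power_divide add_divide_distrib)
  also have "\<dots> = 1"
    using assms by (auto simp: rho_k_def)
  finally obtain t where t: "0 \<le> t" "t < 2 * pi" "?v / ?r = cos t" "?w / ?r = sin t"
    by (rule sincos_total_2pi)
  have "phi_k n k x = t"
    unfolding phi_k_def
    by (rule the_equality) (use t cos_sin_eq_imp_eq_0_2pi in auto)
  with t show "cos (phi_k n k x) = ?v / ?r" "sin (phi_k n k x) = ?w / ?r"
    by simp_all
qed

lemma dft_eq_rcis_rho_phi:
  assumes "rho_k n k x > 0"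
  shows "dft n k x = rcis (rho_k n k x) (phi_k n k x)"
  using cos_sin_phi_k[OF assms] assms by (simp add: dft_eq_Complex_v_k_vt_k rcis_def complex_eq_iff)

lemma dft_canonical_coordinates:
  assumes "2 * j \<le> n" and "\<And>k. 1 \<le> k \<Longrightarrow> k \<le> (n - 1) div 2 \<Longrightarrow> rho_k n k x > 0"
  shows "dft n j x = (if j = 0 then of_real (v_plus n x) else if 2 * j = n then of_real (v_minus n x)
      else rcis (rho_k n j x) (phi_k n j x))"
proof -
  have "j = 0 \<or> 2 * j = n \<or> 1 \<le> j \<and> j \<le> (n - 1) div 2 \<and> 2 * j \<noteq> n"
    using assms(1) by presburger
  then show ?thesis
    using assms(2) by (auto simp: dft_0_eq_v_plus dft_half_eq_v_minus dft_eq_rcis_rho_phi)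
qed

theorem mainTheorem9:
  fixes n :: nat and x :: "nat \<Rightarrow> real"
  assumes "n \<ge> 2"
    and "v_plus n x > 0"
    and "even n \<Longrightarrow> v_minus n x > 0"
    and "\<And>k. 1 \<le> k \<Longrightarrow> k \<le> (n - 1) div 2 \<Longrightarrow> rho_k n k x > 0"
  shows "(\<forall>p<n. x p = pc_exp n (\<lambda>q. e_plus n q * ln (v_plus n x)
              + (if even n then e_minus n q * ln (v_minus n x) else 0)
              + (\<Sum>k=1..(n - 1) div 2. e_k n k q * ln (rho_k n k x) + et_k n k q * phi_k n k x)) p)
      \<and> (\<forall>p<n. x p = pc_mult n
              (\<lambda>q. e_plus n q * v_plus n x
                 + (if even n then e_minus n q * v_minus n x else 0)
                 + (\<Sum>k=1..(n - 1) div 2. e_k n k q * rho_k n k x))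
              (pc_exp n (\<lambda>q. \<Sum>k=1..(n - 1) div 2. et_k n k q * phi_k n k x)) p)"
proof -
  have n: "n > 0"
    using assms(1) by simp
  let ?\<rho> = "\<lambda>k. rho_k n k x" and ?\<phi> = "\<lambda>k. phi_k n k x"
  define L where "L = canonical_comb n (ln (v_plus n x)) (ln (v_minus n x)) (\<lambda>k. ln (?\<rho> k)) ?\<phi>"
  define R where "R = canonical_comb n (v_plus n x) (v_minus n x) ?\<rho> (\<lambda>_. 0)"
  define \<Phi> where "\<Phi> = canonical_comb n 0 0 (\<lambda>_. 0) ?\<phi>"
  have "x p = pc_exp n L p" if "p < n" for p
    using that assms n
    by (intro pc_eq_if_dft_eq) (auto simp: L_def dft_pc_exp dft_canonical_comb dft_canonical_coordinates
        exp_of_real exp_eq_polar rcis_def)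
  moreover have "x p = pc_mult n R (pc_exp n \<Phi>) p" if "p < n" for p
    using that assms n
    by (intro pc_eq_if_dft_eq) (auto simp: R_def \<Phi>_def dft_pc_mult dft_pc_exp dft_canonical_comb
        dft_canonical_coordinates exp_eq_polar rcis_def complex_eq_iff)
  ultimately show ?thesis
    unfolding L_def R_def \<Phi>_def canonical_comb_def by (simp cong: if_cong)
qed

end
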